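(* For all program states $(s,h)$ and all $f\in\mathbb{T}$, $$\mathsf{ert}[\![x:=\langle e\rangle]\!](f)(s,h)=\begin{cases} f(s[x\mapsto h(s(e))],h) & \text{if } s(e)\in\mathrm{dom}(h),\\ \infty & \text{if } s(e)\notin\mathrm{dom}(h),\end{cases}$$ where $\mathsf{ert}[\![x:=\langle e\rangle]\!](f)=\inf v\colon [e\mapsto v]\oplus([e\mapsto v]\mathbin{-\!\!\ominus} f[x/v])$ with $v$ a fresh variable.
   Context: Fix a finite set $\mathrm{Vars}$ of variables. A stack is $s\colon\mathrm{Vars}\to\mathbb{N}$; a heap is a partial map $h$ from a finite set $\mathrm{dom}(h)\subseteq\mathbb{N}_{>0}$ to $\mathbb{N}$; $h_1\perp h_2$ means disjoint domains, and then $h_1\star h_2$ is their union. $\mathsf{States}$ is the set of pairs $(s,h)$; $s(e)$ is the value of a heap-independent arithmetic expression $e$; $s[x\mapsto v]$ is the updated stack. $\mathbb{T}$ is the set of functions $\mathsf{States}\to[0,\infty]$. Truncated subtraction: $a\dot- b=\max(a-b,0)$, $\infty\dot- b=\infty$ for finite $b$, $a\dot-\infty=0$. $(f\oplus g)(s,h)=\min\{f(s,h_1)+g(s,h_2)\mid h=h_1\star h_2\}$; $(f\mathbin{-\!\!\ominus} g)(s,h)=\sup\{g(s,h\star h')\dot- f(s,h')\mid h'\perp h\}$; $(\inf v\colon f)(s,h)=\inf_{n\in\mathbb{N}}f(s[v\mapsto n],h)$; $f[x/v](s,h)=f(s[x\mapsto s(v)],h)$. $[e\mapsto e'](s,h)=0$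 if $\mathrm{dom}(h)=\{s(e)\}$ and $h(s(e))=s(e')$, and $\infty$ otherwise. *)

theory Defs
  imports "HOL-Library.Extended_Nonnegative_Real"
begin

type_synonym 'v stack = "'v \<Rightarrow> nat"
type_synonym heap = "nat \<rightharpoonup> nat"
type_synonym 'v state = "'v stack \<times> heap"
type_synonym 'v expectation = "'v state \<Rightarrow> ennreal"
type_synonym 'v aexp = "'v stack \<Rightarrow> nat"

definition is_heap :: "heap \<Rightarrow> bool" where
  "is_heap h \<longleftrightarrow> finite (dom h) \<and> 0 \<notin> dom h"

definition hdisj :: "heap \<Rightarrow> heap \<Rightarrow> bool" where
  "hdisj h1 h2 \<longleftrightarrow> dom h1 \<inter> dom h2 = {}"

definition tsub :: "ennreal \<Rightarrow> ennreal \<Rightarrow> ennreal" where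
  "tsub a b = (if b = \<infinity> then 0 else if a = \<infinity> then \<infinity> else a - b)"

definition sepcon :: "'v expectation \<Rightarrow> 'v expectation \<Rightarrow> 'v expectation" where
  "sepcon f g = (\<lambda>(s, h). Inf {f (s, h1) + g (s, h2) | h1 h2.
      is_heap h1 \<and> is_heap h2 \<and> hdisj h1 h2 \<and> h = h1 ++ h2})"

definition sepimp :: "'v expectation \<Rightarrow> 'v expectation \<Rightarrow> 'v expectation" where
  "sepimp f g = (\<lambda>(s, h). Sup {tsub (g (s, h ++ h')) (f (s, h')) | h'.
      is_heap h' \<and> hdisj h' h})"

definition inf_var :: "'v \<Rightarrow> 'v expectation \<Rightarrow> 'v expectation" where
  "inf_var v f = (\<lambda>(s, h). INF n::nat. f (s(v := n), h))"

definition subst_var :: "'v expectation \<Rightarrow> 'v \<Rightarrow> 'v \<Rightarrow> 'v expectation" where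
  "subst_var f x v = (\<lambda>(s, h). f (s(x := s v), h))"

definition pointsto :: "'v aexp \<Rightarrow> 'v aexp \<Rightarrow> 'v expectation" where
  "pointsto e e' = (\<lambda>(s, h). if dom h = {e s} \<and> h (e s) = Some (e' s) then 0 else \<infinity>)"

definition ert_lookup :: "'v \<Rightarrow> 'v aexp \<Rightarrow> 'v \<Rightarrow> 'v expectation \<Rightarrow> 'v expectation" where
  "ert_lookup x e v f = inf_var v
     (sepcon (pointsto e (\<lambda>s. s v)) (sepimp (pointsto e (\<lambda>s. s v)) (subst_var f x v)))"

end

theory Submission
  imports Defs
begin

text \<open>A points-to assertion \<open>[e \<mapsto> v]\<close> on the left of a separating conjunction carves
  the cell \<open>e s\<close> out of the heap and costs \<open>\<infinity>\<close> unless that cell holds \<open>v\<close>; on the left of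
  a magic wand it puts the same cell back. So for each value \<open>n\<close> of the fresh variable the
  body of the infimum is \<open>f (s[x \<mapsto> n], h)\<close> if \<open>h (e s) = n\<close> and \<open>\<infinity>\<close> otherwise, and the
  infimum over \<open>n\<close> selects the value actually stored at \<open>e s\<close>.\<close>

lemma pointsto_eq: "pointsto e e' (s, h) = (if h = [e s \<mapsto> e' s] then 0 else \<infinity>)"
  by (auto simp: pointsto_def dom_eq_singleton_conv)

lemma tsub_zero_right [simp]: "tsub a 0 = a"
  by (simp add: tsub_def)

lemma tsub_top_right [simp]: "tsub a top = 0"
  by (simp add: tsub_def)

lemma sepimp_pointsto:
  assumes "e s \<noteq> 0" and "e s \<notin> dom h"
  shows "sepimp (pointsto e e') g (s, h) = g (s, h ++ [e s \<mapsto> e' s])"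
proof -
  let ?cell = "[e s \<mapsto> e' s]"
  let ?S = "{tsub (g (s, h ++ h')) (pointsto e e' (s, h')) | h'. is_heap h' \<and> hdisj h' h}"
  have "?S \<subseteq> {g (s, h ++ ?cell), 0}"
    by (auto simp: pointsto_eq)
  moreover have "g (s, h ++ ?cell) \<in> ?S"
    using assms by (auto simp: pointsto_eq is_heap_def hdisj_def intro!: exI[of _ ?cell])
  ultimately have "Sup ?S = g (s, h ++ ?cell)"
    by (intro antisym Sup_upper Sup_least) auto
  then show ?thesis
    by (simp add: sepimp_def)
qed

lemma map_add_singleton_eq_iff:
  assumes "hdisj [a \<mapsto> b] h2"
  shows "h = [a \<mapsto> b] ++ h2 \<longleftrightarrow> h a = Some b \<and> h2 = h(a := None)"
proof
  assume h: "h = [a \<mapsto> b] ++ h2"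
  have "h2 a = None"
    using assms by (auto simp: hdisj_def)
  then show "h a = Some b \<and> h2 = h(a := None)"
    by (auto simp: h map_add_def fun_eq_iff split: option.split)
next
  assume "h a = Some b \<and> h2 = h(a := None)"
  then show "h = [a \<mapsto> b] ++ h2"
    by (auto simp: map_add_def fun_eq_iff split: option.split)
qed

lemma sepcon_pointsto:
  assumes "is_heap h"
  shows "sepcon (pointsto e e') g (s, h) =
           (if h (e s) = Some (e' s) then g (s, h(e s := None)) else \<infinity>)"
proof -
  let ?cell = "[e s \<mapsto> e' s]"
  let ?S = "{pointsto e e' (s, h1) + g (s, h2) | h1 h2.
      is_heap h1 \<and> is_heap h2 \<and> hdisj h1 h2 \<and> h = h1 ++ h2}"
  have S_cases: "y = \<infinity> \<or> h (e s) = Some (e' s) \<and> y = g (s, h(e s := None))"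
    if "y \<in> ?S" for y
  proof -
    obtain h1 h2 where y: "y = pointsto e e' (s, h1) + g (s, h2)"
      and split: "hdisj h1 h2" "h = h1 ++ h2"
      using \<open>y \<in> ?S\<close> by blast
    show ?thesis
    proof (cases "h1 = ?cell")
      case True
      then have "h (e s) = Some (e' s) \<and> h2 = h(e s := None)"
        using split map_add_singleton_eq_iff by blast
      then show ?thesis using y True by (simp add: pointsto_eq)
    qed (simp add: y pointsto_eq)
  qed
  have S_mem: "g (s, h(e s := None)) \<in> ?S" if "h (e s) = Some (e' s)"
  proof -
    have "is_heap ?cell" "is_heap (h(e s := None))" "hdisj ?cell (h(e s := None))"
      using assms that by (auto simp: is_heap_def hdisj_def)
    moreover have "h = ?cell ++ h(e s := None)"
      using that \<open>hdisj ?cell (h(e s := None))\<close> by (simp add: map_add_singleton_eq_iff)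
    moreover have "g (s, h(e s := None)) = pointsto e e' (s, ?cell) + g (s, h(e s := None))"
      by (simp add: pointsto_eq)
    ultimately show ?thesis
      by blast
  qed
  have "Inf ?S = (if h (e s) = Some (e' s) then g (s, h(e s := None)) else \<infinity>)"
  proof (cases "h (e s) = Some (e' s)")
    case True
    have "g (s, h(e s := None)) \<le> y" if "y \<in> ?S" for y
      using S_cases[OF that] by auto
    then have "Inf ?S = g (s, h(e s := None))"
      using Inf_lower[OF S_mem[OF True]] by (blast intro: antisym Inf_greatest)
    then show ?thesis
      using True by simp
  next
    case False
    then show ?thesis
      using S_cases by (simp add: Inf_top_conv)
  qed
  then show ?thesis
    by (simp add: sepcon_def)
qed

lemma INF_if_Some:
  fixes F :: "'a \<Rightarrow> 'b::complete_lattice"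
  shows "(INF y. if m = Some y then F y else top) = (case m of None \<Rightarrow> top | Some b \<Rightarrow> F b)"
  by (cases m) (auto intro!: antisym INF_lower INF_greatest)

theorem mainTheorem13:
  fixes x v :: 'v and e :: "'v aexp" and f :: "'v expectation"
    and s :: "'v stack" and h :: heap
  assumes "is_heap h"
    and fresh_x: "v \<noteq> x"
    and fresh_e: "\<forall>s' n. e (s'(v := n)) = e s'"
    and fresh_f: "\<forall>s' h' n. f (s'(v := n), h') = f (s', h')"
  shows "ert_lookup x e v f (s, h) =
           (if e s \<in> dom h then f (s(x := the (h (e s))), h) else \<infinity>)"
proof -
  let ?P = "pointsto e (\<lambda>s. s v)"
  have "sepcon ?P (sepimp ?P (subst_var f x v)) (s(v := n), h) =
          (if h (e s) = Some n then f (s(x := n), h) else \<infinity>)" for n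
  proof (cases "h (e s) = Some n")
    case True
    then have "e s \<noteq> 0"
      using \<open>is_heap h\<close> by (auto simp: is_heap_def)
    moreover have "f (s(v := n, x := n), h) = f (s(x := n), h)"
      using fresh_f by (simp add: fun_upd_twist[OF fresh_x])
    ultimately show ?thesis
      using True fresh_e
      by (simp add: sepcon_pointsto sepimp_pointsto \<open>is_heap h\<close> subst_var_def fun_upd_idem)
  qed (use fresh_e \<open>is_heap h\<close> in \<open>simp add: sepcon_pointsto\<close>)
  then have "ert_lookup x e v f (s, h) = (INF n. if h (e s) = Some n then f (s(x := n), h) else \<infinity>)"
    by (simp add: ert_lookup_def inf_var_def)
  then show ?thesis
    by (auto simp: INF_if_Some split: option.split)
qed

end
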